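(* Let $V^{10},V^{01}$ be nonzero Euclidean spaces and $S^{00},S^{10},S^{01},S^{11}$ nonzero Euclidean spaces such that $S^{00}\oplus S^{10}$ and $S^{01}\oplus S^{11}$ are $\mathrm{Cl}(V^{10})$-modules and $S^{00}\oplus S^{01}$ and $S^{10}\oplus S^{11}$ are $\mathrm{Cl}(V^{01})$-modules. Consider the rank 4 Clifford quasiNil-algebra $\mathcal N$ with $\mathcal N_{12}=V^{10},\mathcal N_{13}=S^{10},\mathcal N_{14}=S^{11},\mathcal N_{23}=S^{00},\mathcal N_{24}=S^{01},\mathcal N_{34}=V^{01}$ and products $\mu_{123}(v,s)=vs$, $\mu_{124}(v,s)=vs$, $\mu_{234}(s,w)=ws$, $\mu_{134}(s,w)=ws$. Then $\mathcal N$ is associative if and only if the actions of $V^{10}$ and $V^{01}$ on $S=S^{00}\oplus S^{10}\oplus S^{01}\oplus S^{11}$ commute, i.e. if and only if these actions extend to a $\mathbb Z/2\times\mathbb Z/2$-graded module structure on $S$ over $\mathrm{Cl}(V^{10})\otimes\mathrm{Cl}(V^{01})$ (ordinary tensor product, with $V^{10}$ of bidegree $(1,0)$ and $V^{01}$ of bidegree $(0,1)$). Conversely, every such bigraded module (with a metric making the four summands orthogonal and all elements of $V^{10}\cup V^{01}$ skew-symmetric) yields in this way an associative Clifford quasiNil-algebra.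
   Context: All spaces finite-dimensional real. $\mathrm{Cl}(X)$ is the Clifford algebra of a Euclidean space $X$ with $x\cdot x=-|x|^2$. A "$\mathrm{Cl}(X)$-module $Y\oplus Z$" is a $\mathbb Z/2$-graded module ($XY\subset Z$, $XZ\subset Y$) with a Euclidean metric with $Y\perp Z$ and each $x\in X$ skew-symmetric. A quasiNil-algebra of rank $n$: Euclidean space $\bigoplus_{i<j}\mathcal N_{ij}$ (orthogonal) with bilinear maps $\mu_{ijk}:\mathcal N_{ij}\times\mathcal N_{jk}\to\mathcal N_{ik}$ satisfying $|\mu_{ijk}(x,y)|=|x||y|$, and product $(AB)_{ik}=\sum_j\mu_{ijk}(a_{ij},b_{jk})$ on strictly upper triangular matrices $(a_{ij})$, $a_{ij}\in\mathcal N_{ij}$; associative means $(AB)C=A(BC)$ for all $A,B,C$. *)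

theory Defs
  imports "HOL-Analysis.Analysis"
begin

text \<open>A graded Cl(X)-module Y (+) Z, Y orthogonal to Z (separate types), given by the
  action of X: a x : Y -> Z and b x : Z -> Y, linear in x and in the module element,
  satisfying the Clifford relation x.x = -|x|^2 and with each x skew-symmetric.\<close>
definition cl_module ::
  "('x::euclidean_space \<Rightarrow> 'y::euclidean_space \<Rightarrow> 'z::euclidean_space) \<Rightarrow> ('x \<Rightarrow> 'z \<Rightarrow> 'y) \<Rightarrow> bool" where
  "cl_module a b \<longleftrightarrow>
     bilinear a \<and> bilinear b \<and>
     (\<forall>x y. b x (a x y) = - ((norm x)\<^sup>2 *\<^sub>R y)) \<and>
     (\<forall>x z. a x (b x z) = - ((norm x)\<^sup>2 *\<^sub>R z)) \<and>
     (\<forall>x y z. inner (a x y) z = - inner y (b x z))"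

text \<open>Strictly upper triangular 4x4 "matrices" with entries n_ij in N_ij.\<close>
record ('n12, 'n13, 'n14, 'n23, 'n24, 'n34) qn4 =
  n12 :: 'n12
  n13 :: 'n13
  n14 :: 'n14
  n23 :: 'n23
  n24 :: 'n24
  n34 :: 'n34

text \<open>Product of a rank 4 quasiNil algebra: (AB)_ik = sum_j mu_ijk(a_ij, b_jk).\<close>
definition qn4_mult ::
  "('n12 \<Rightarrow> 'n23 \<Rightarrow> 'n13::real_vector) \<Rightarrow> ('n12 \<Rightarrow> 'n24 \<Rightarrow> 'n14::real_vector) \<Rightarrow>
   ('n13 \<Rightarrow> 'n34 \<Rightarrow> 'n14) \<Rightarrow> ('n23 \<Rightarrow> 'n34 \<Rightarrow> 'n24::real_vector) \<Rightarrow>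
   ('n12::real_vector, 'n13, 'n14, 'n23::real_vector, 'n24, 'n34::real_vector) qn4 \<Rightarrow>
   ('n12, 'n13, 'n14, 'n23, 'n24, 'n34) qn4 \<Rightarrow> ('n12, 'n13, 'n14, 'n23, 'n24, 'n34) qn4" where
  "qn4_mult m123 m124 m134 m234 A B =
     \<lparr> n12 = 0,
       n13 = m123 (n12 A) (n23 B),
       n14 = m124 (n12 A) (n24 B) + m134 (n13 A) (n34 B),
       n23 = 0,
       n24 = m234 (n23 A) (n34 B),
       n34 = 0 \<rparr>"

definition quasiNil4 ::
  "('n12::real_normed_vector \<Rightarrow> 'n23::real_normed_vector \<Rightarrow> 'n13::real_normed_vector) \<Rightarrow>
   ('n12 \<Rightarrow> 'n24::real_normed_vector \<Rightarrow> 'n14::real_normed_vector) \<Rightarrow>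
   ('n13 \<Rightarrow> 'n34::real_normed_vector \<Rightarrow> 'n14) \<Rightarrow> ('n23 \<Rightarrow> 'n34 \<Rightarrow> 'n24) \<Rightarrow> bool" where
  "quasiNil4 m123 m124 m134 m234 \<longleftrightarrow>
     bilinear m123 \<and> bilinear m124 \<and> bilinear m134 \<and> bilinear m234 \<and>
     (\<forall>x y. norm (m123 x y) = norm x * norm y) \<and>
     (\<forall>x y. norm (m124 x y) = norm x * norm y) \<and>
     (\<forall>x y. norm (m134 x y) = norm x * norm y) \<and>
     (\<forall>x y. norm (m234 x y) = norm x * norm y)"

definition qn4_assoc ::
  "('n12::real_vector \<Rightarrow> 'n23::real_vector \<Rightarrow> 'n13::real_vector) \<Rightarrow> ('n12 \<Rightarrow> 'n24 \<Rightarrow> 'n14::real_vector) \<Rightarrow>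
   ('n13 \<Rightarrow> 'n34::real_vector \<Rightarrow> 'n14) \<Rightarrow> ('n23 \<Rightarrow> 'n34 \<Rightarrow> 'n24::real_vector) \<Rightarrow> bool" where
  "qn4_assoc m123 m124 m134 m234 \<longleftrightarrow>
     (\<forall>(A::('n12, 'n13, 'n14, 'n23, 'n24, 'n34) qn4) B C.
        qn4_mult m123 m124 m134 m234 (qn4_mult m123 m124 m134 m234 A B) C =
        qn4_mult m123 m124 m134 m234 A (qn4_mult m123 m124 m134 m234 B C))"

text \<open>The actions of V10 (a0,a1 on S00+S10; b0,b1 on S01+S11) and of V01
  (c0,c1 on S00+S01; d0,d1 on S10+S11) on S = S00+S10+S01+S11 commute:
  w(vs) = v(ws) for all v in V10, w in V01, s in each summand.\<close>
definition actions_commute ::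
  "('v10 \<Rightarrow> 's00 \<Rightarrow> 's10) \<Rightarrow> ('v10 \<Rightarrow> 's10 \<Rightarrow> 's00) \<Rightarrow>
   ('v10 \<Rightarrow> 's01 \<Rightarrow> 's11) \<Rightarrow> ('v10 \<Rightarrow> 's11 \<Rightarrow> 's01) \<Rightarrow>
   ('v01 \<Rightarrow> 's00 \<Rightarrow> 's01) \<Rightarrow> ('v01 \<Rightarrow> 's01 \<Rightarrow> 's00) \<Rightarrow>
   ('v01 \<Rightarrow> 's10 \<Rightarrow> 's11) \<Rightarrow> ('v01 \<Rightarrow> 's11 \<Rightarrow> 's10) \<Rightarrow> bool" where
  "actions_commute a0 a1 b0 b1 c0 c1 d0 d1 \<longleftrightarrow>
     (\<forall>v w s. d0 w (a0 v s) = b0 v (c0 w s)) \<and>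
     (\<forall>v w s. c0 w (a1 v s) = b1 v (d0 w s)) \<and>
     (\<forall>v w s. d1 w (b0 v s) = a0 v (c1 w s)) \<and>
     (\<forall>v w s. c1 w (b1 v s) = a1 v (d1 w s))"

end

theory Submission
  imports Defs
begin

text \<open>Each Clifford action v\<cdot> is \<open>|v|\<close> times an isometry, which gives the norm condition of a
  quasiNil-algebra. Associativity only involves the triple product \<open>\<mu>\<^sub>1\<^sub>2\<^sub>4 x (\<mu>\<^sub>2\<^sub>3\<^sub>4 y z) =
  \<mu>\<^sub>1\<^sub>3\<^sub>4 (\<mu>\<^sub>1\<^sub>2\<^sub>3 x y) z\<close>, i.e. \<open>w(vs) = v(ws)\<close> for \<open>s \<in> S\<^sup>0\<^sup>0\<close>. The other three commutation rules
  follow from this one: applying \<open>v\<close> (or \<open>w\<close>) to both sides of a commutation rule and using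
  \<open>v\<cdot>v = -|v|\<^sup>2\<close> yields the rule for the adjoint action, up to the factor \<open>-|v|\<^sup>2\<close>.\<close>

lemma bilinear_swap: "bilinear f \<Longrightarrow> bilinear (\<lambda>x y. f y x)"
  unfolding bilinear_def by simp

lemma
  assumes "cl_module a b"
  shows cl_module_bilinear_action: "bilinear a"
    and cl_module_bilinear_adjoint: "bilinear b"
    and cl_module_adjoint_action: "b x (a x y) = - ((norm x)\<^sup>2 *\<^sub>R y)"
    and cl_module_action_adjoint: "a x (b x z) = - ((norm x)\<^sup>2 *\<^sub>R z)"
    and cl_module_skew: "inner (a x y) z = - inner y (b x z)"
  using assms unfolding cl_module_def by blast+

lemma cl_module_linear_action: "cl_module a b \<Longrightarrow> linear (a x)"
  and cl_module_linear_adjoint: "cl_module a b \<Longrightarrow> linear (b x)"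
  using cl_module_bilinear_action cl_module_bilinear_adjoint unfolding bilinear_def by blast+

lemma cl_module_norm_action:
  assumes "cl_module a b"
  shows "norm (a x y) = norm x * norm y"
proof -
  have "(norm (a x y))\<^sup>2 = - inner y (b x (a x y))"
    by (simp add: power2_norm_eq_inner cl_module_skew[OF assms])
  also have "\<dots> = (norm x * norm y)\<^sup>2"
    by (simp add: cl_module_adjoint_action[OF assms] power2_norm_eq_inner power_mult_distrib)
  finally show ?thesis
    by (simp add: power2_eq_iff_nonneg)
qed

lemma cl_module_intertwines_adjoint:
  assumes a: "cl_module a0 a1" and b: "cl_module b0 b1"
    and f: "linear f" and g: "linear g"
    and intertwines: "\<And>v s. g (a0 v s) = b0 v (f s)"
  shows "f (a1 v s) = b1 v (g s)"
proof (cases "v = 0")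
  case True
  then show ?thesis
    using linear_0[OF f] bilinear_lzero[OF cl_module_bilinear_adjoint[OF a]]
      bilinear_lzero[OF cl_module_bilinear_adjoint[OF b]] by simp
next
  case False
  have "- ((norm v)\<^sup>2 *\<^sub>R b1 v (g s)) = b1 v (g (a0 v (a1 v s)))"
    by (simp add: cl_module_action_adjoint[OF a] linear_neg[OF g] linear_scale[OF g]
        cl_module_linear_adjoint[OF b, THEN linear_neg] cl_module_linear_adjoint[OF b, THEN linear_scale])
  also have "\<dots> = b1 v (b0 v (f (a1 v s)))"
    by (simp add: intertwines)
  also have "\<dots> = - ((norm v)\<^sup>2 *\<^sub>R f (a1 v s))"
    by (rule cl_module_adjoint_action[OF b])
  finally show ?thesis
    using False by simp
qed

lemma qn4_assoc_iff_triple_product: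
  fixes m123 :: "'n12::real_vector \<Rightarrow> 'n23::real_vector \<Rightarrow> 'n13::real_vector"
    and m124 :: "'n12 \<Rightarrow> 'n24::real_vector \<Rightarrow> 'n14::real_vector"
    and m134 :: "'n13 \<Rightarrow> 'n34::real_vector \<Rightarrow> 'n14"
    and m234 :: "'n23 \<Rightarrow> 'n34 \<Rightarrow> 'n24"
  assumes "bilinear m123" "bilinear m124" "bilinear m134" "bilinear m234"
  shows "qn4_assoc m123 m124 m134 m234 \<longleftrightarrow>
    (\<forall>x y z. m134 (m123 x y) z = m124 x (m234 y z))"
proof
  assume assoc: "qn4_assoc m123 m124 m134 m234"
  show "\<forall>x y z. m134 (m123 x y) z = m124 x (m234 y z)"
  proof (intro allI)
    fix x :: 'n12 and y :: 'n23 and z :: 'n34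
    let ?A = "\<lparr>n12 = x, n13 = 0, n14 = 0, n23 = 0, n24 = 0, n34 = 0\<rparr>"
    let ?B = "\<lparr>n12 = 0, n13 = 0, n14 = 0, n23 = y, n24 = 0, n34 = 0\<rparr>"
    let ?C = "\<lparr>n12 = 0, n13 = 0, n14 = 0, n23 = 0, n24 = 0, n34 = z\<rparr>"
    have "n14 (qn4_mult m123 m124 m134 m234 (qn4_mult m123 m124 m134 m234 ?A ?B) ?C) =
        n14 (qn4_mult m123 m124 m134 m234 ?A (qn4_mult m123 m124 m134 m234 ?B ?C))"
      using assoc unfolding qn4_assoc_def by simp
    then show "m134 (m123 x y) z = m124 x (m234 y z)"
      using assms by (simp add: qn4_mult_def bilinear_lzero bilinear_rzero)
  qed
next
  assume "\<forall>x y z. m134 (m123 x y) z = m124 x (m234 y z)"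
  then show "qn4_assoc m123 m124 m134 m234"
    using assms by (simp add: qn4_assoc_def qn4_mult_def bilinear_lzero bilinear_rzero)
qed

lemma actions_commute_iff_commute_on_S00:
  assumes "cl_module a0 a1" and "cl_module b0 b1"
    and "cl_module c0 c1" and "cl_module d0 d1"
  shows "actions_commute a0 a1 b0 b1 c0 c1 d0 d1 \<longleftrightarrow>
    (\<forall>v w s. d0 w (a0 v s) = b0 v (c0 w s))"
proof
  note lin = assms[THEN cl_module_linear_action] assms[THEN cl_module_linear_adjoint]
  assume comm: "\<forall>v w s. d0 w (a0 v s) = b0 v (c0 w s)"
  have comm2: "c0 w (a1 v s) = b1 v (d0 w s)" for v w s
    using cl_module_intertwines_adjoint[OF assms(1,2) lin(3) lin(4)] comm by simp
  have "d1 w (b0 v s) = a0 v (c1 w s)" for v w s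
    using cl_module_intertwines_adjoint[OF assms(3,4) lin(1) lin(2)] comm by simp
  moreover have "c1 w (b1 v s) = a1 v (d1 w s)" for v w s
    using cl_module_intertwines_adjoint[OF assms(4,3) lin(5) lin(6)] comm2 by simp
  ultimately show "actions_commute a0 a1 b0 b1 c0 c1 d0 d1"
    using comm comm2 unfolding actions_commute_def by blast
qed (simp add: actions_commute_def)

theorem mainTheorem12:
  fixes a0 :: "'v10::euclidean_space \<Rightarrow> 's00::euclidean_space \<Rightarrow> 's10::euclidean_space"
    and a1 :: "'v10 \<Rightarrow> 's10 \<Rightarrow> 's00"
    and b0 :: "'v10 \<Rightarrow> 's01::euclidean_space \<Rightarrow> 's11::euclidean_space"
    and b1 :: "'v10 \<Rightarrow> 's11 \<Rightarrow> 's01"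
    and c0 :: "'v01::euclidean_space \<Rightarrow> 's00 \<Rightarrow> 's01"
    and c1 :: "'v01 \<Rightarrow> 's01 \<Rightarrow> 's00"
    and d0 :: "'v01 \<Rightarrow> 's10 \<Rightarrow> 's11"
    and d1 :: "'v01 \<Rightarrow> 's11 \<Rightarrow> 's10"
  assumes "cl_module a0 a1" and "cl_module b0 b1"
    and "cl_module c0 c1" and "cl_module d0 d1"
  shows "quasiNil4 a0 b0 (\<lambda>s w. d0 w s) (\<lambda>s w. c0 w s)
    \<and> (qn4_assoc a0 b0 (\<lambda>s w. d0 w s) (\<lambda>s w. c0 w s) \<longleftrightarrow>
         actions_commute a0 a1 b0 b1 c0 c1 d0 d1)
    \<and> (actions_commute a0 a1 b0 b1 c0 c1 d0 d1 \<longrightarrow>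
         quasiNil4 a0 b0 (\<lambda>s w. d0 w s) (\<lambda>s w. c0 w s) \<and>
         qn4_assoc a0 b0 (\<lambda>s w. d0 w s) (\<lambda>s w. c0 w s))"
proof -
  note bil = assms[THEN cl_module_bilinear_action]
  have quasiNil: "quasiNil4 a0 b0 (\<lambda>s w. d0 w s) (\<lambda>s w. c0 w s)"
    using bil bil[THEN bilinear_swap] assms[THEN cl_module_norm_action]
    by (simp add: quasiNil4_def mult.commute)
  have "actions_commute a0 a1 b0 b1 c0 c1 d0 d1 \<longleftrightarrow>
      (\<forall>v w s. d0 w (a0 v s) = b0 v (c0 w s))"
    using assms by (rule actions_commute_iff_commute_on_S00)
  moreover have "qn4_assoc a0 b0 (\<lambda>s w. d0 w s) (\<lambda>s w. c0 w s) \<longleftrightarrow>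
      (\<forall>v w s. d0 w (a0 v s) = b0 v (c0 w s))"
    using bil bil[THEN bilinear_swap] by (auto simp: qn4_assoc_iff_triple_product)
  ultimately show ?thesis
    using quasiNil by blast
qed

end
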